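(* Let $N$ be a positive integer, $R\in\{0,1,\dots,N\}$, $B=N-R$, $n\in\{1,\dots,N\}$, and let $X$ have the hypergeometric distribution $$\Pr\{X=x\}=\frac{\binom Rx\binom B{n-x}}{\binom Nn}\ \text{ for }x\in\{0,\dots,n\}\text{ with }x\le R,\ n-x\le B,\qquad \Pr\{X=x\}=0\text{ for other }x\in\{0,\dots,n\}.$$ Let $\mu=nR/N$. Let $r,b$ be nonnegative integers with $r\le R$, $b\le B$, $r+b=n$. Define $\widehat R=\min\{N,\lfloor(N+1)\frac rn\rfloor\}$ and $\widehat B=N-\widehat R$. Then $$\Pr\{X\le r\}\le\frac{\binom Rr\binom Bb}{\binom{\widehat R}r\binom{\widehat B}b}\ \text{ for }r\le\mu,\qquad \Pr\{X\ge r\}\le\frac{\binom Rr\binom Bb}{\binom{\widehat R}r\binom{\widehat B}b}\ \text{ for }r\ge\mu.$$ *)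

theory Defs
  imports Complex_Main
begin

definition hyper_pmf :: "nat \<Rightarrow> nat \<Rightarrow> nat \<Rightarrow> nat \<Rightarrow> real" where
  "hyper_pmf N R n x =
     (if x \<le> n \<and> x \<le> R \<and> n - x \<le> N - R
      then real (R choose x) * real ((N - R) choose (n - x)) / real (N choose n)
      else 0)"

definition hyper_le :: "nat \<Rightarrow> nat \<Rightarrow> nat \<Rightarrow> nat \<Rightarrow> real" where
  "hyper_le N R n r = (\<Sum>x\<in>{0..n}. if x \<le> r then hyper_pmf N R n x else 0)"

definition hyper_ge :: "nat \<Rightarrow> nat \<Rightarrow> nat \<Rightarrow> nat \<Rightarrow> real" where
  "hyper_ge N R n r = (\<Sum>x\<in>{0..n}. if r \<le> x then hyper_pmf N R n x else 0)"

end

theory Submission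
  imports Defs
begin

text \<open>Write w(R, x) = C(R, x) C(N - R, n - x) for the number of samples with x red items.
  Total positivity of the binomial coefficients makes w(R, x) / w(R', x) nondecreasing in x
  whenever R' \<le> R. So if Rh \<le> R, each term of the lower tail x \<le> r obeys
  P_R(x) \<le> w(R, r) / w(Rh, r) \<cdot> P_Rh(x), and summing against the distribution P_Rh, of total
  mass 1, gives the bound; the upper tail with R \<le> Rh is symmetric. The estimate Rh (the
  maximum-likelihood estimate of R) satisfies Rh \<le> R when r \<le> \<mu>, R \<le> Rh when r \<ge> \<mu>,
  and w(Rh, r) > 0.\<close>

definition hyper_weight :: "nat \<Rightarrow> nat \<Rightarrow> nat \<Rightarrow> nat \<Rightarrow> nat" where
  "hyper_weight N R n x = (R choose x) * ((N - R) choose (n - x))"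

lemma hyper_pmf_eq:
  assumes "x \<le> n"
  shows "hyper_pmf N R n x = real (hyper_weight N R n x) / real (N choose n)"
  using assms by (auto simp: hyper_pmf_def hyper_weight_def)

lemma sum_hyper_weight:
  assumes "R \<le> N"
  shows "(\<Sum>x\<le>n. hyper_weight N R n x) = N choose n"
  using vandermonde[of R "N - R" n] assms by (simp add: hyper_weight_def)

lemma sum_hyper_pmf:
  assumes "R \<le> N" "n \<le> N"
  shows "(\<Sum>x\<in>{0..n}. hyper_pmf N R n x) = 1"
proof -
  have "(\<Sum>x\<in>{0..n}. hyper_pmf N R n x) = real (\<Sum>x\<le>n. hyper_weight N R n x) / real (N choose n)"
    by (simp add: hyper_pmf_eq atMost_atLeast0 sum_divide_distrib)
  also have "\<dots> = 1"
    using assms by (simp add: sum_hyper_weight)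
  finally show ?thesis .
qed

lemma Suc_mult_choose_Suc: "Suc k * (n choose Suc k) = (n - k) * (n choose k)"
  by (simp only: binomial_absorption binomial_absorb_comp)

lemma choose_cross_le:
  assumes "x \<le> y" "R' \<le> R"
  shows "(R choose x) * (R' choose y) \<le> (R choose y) * (R' choose x)"
  using assms(1)
proof (induction y rule: dec_induct)
  case base
  then show ?case by (simp add: mult.commute)
next
  case (step y)
  have "Suc y * ((R choose x) * (R' choose Suc y)) = (R choose x) * (R' choose y) * (R' - y)"
    using Suc_mult_choose_Suc[of y R'] by (metis mult.assoc mult.left_commute mult.commute)
  also have "\<dots> \<le> (R choose y) * (R' choose x) * (R - y)"
    by (rule mult_mono) (use step.IH assms(2) in auto)
  also have "\<dots> = Suc y * ((R choose Suc y) * (R' choose x))"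
    using Suc_mult_choose_Suc[of y R] by (metis mult.assoc mult.left_commute mult.commute)
  finally show ?case
    by (simp only: mult_le_cancel1)
qed

lemma hyper_weight_cross_le:
  assumes "x \<le> y" "y \<le> n" "R' \<le> R"
  shows "hyper_weight N R n x * hyper_weight N R' n y \<le> hyper_weight N R n y * hyper_weight N R' n x"
proof -
  have "(R choose x) * (R' choose y) \<le> (R choose y) * (R' choose x)"
    using assms by (intro choose_cross_le)
  moreover have "((N - R') choose (n - y)) * ((N - R) choose (n - x))
      \<le> ((N - R') choose (n - x)) * ((N - R) choose (n - y))"
    using assms by (intro choose_cross_le diff_le_mono2 diff_le_mono2)
  ultimately show ?thesis
    unfolding hyper_weight_def using mult_mono by (fastforce simp: mult_ac)
qed

lemma hyper_tail_le_weight_ratio: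
  fixes P :: "nat \<Rightarrow> bool"
  assumes "R' \<le> N" "n \<le> N" "hyper_weight N R' n r > 0"
    and cross: "\<And>x. x \<le> n \<Longrightarrow> P x \<Longrightarrow>
      hyper_weight N R n x * hyper_weight N R' n r \<le> hyper_weight N R n r * hyper_weight N R' n x"
  shows "(\<Sum>x\<in>{0..n}. if P x then hyper_pmf N R n x else 0)
    \<le> real (hyper_weight N R n r) / real (hyper_weight N R' n r)"
proof -
  define \<rho> where "\<rho> = real (hyper_weight N R n r) / real (hyper_weight N R' n r)"
  have "\<rho> \<ge> 0"
    by (simp add: \<rho>_def)
  have termwise: "(if P x then hyper_pmf N R n x else 0) \<le> \<rho> * hyper_pmf N R' n x"
    if "x \<in> {0..n}" for x
  proof (cases "P x")
    case True
    have "real (hyper_weight N R n x) * real (hyper_weight N R' n r)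
        \<le> real (hyper_weight N R n r) * real (hyper_weight N R' n x)"
      using cross[of x] that True by (simp flip: of_nat_mult)
    then have "real (hyper_weight N R n x) \<le> \<rho> * real (hyper_weight N R' n x)"
      using assms(3) by (simp add: \<rho>_def field_simps)
    then show ?thesis
      using True that by (simp add: hyper_pmf_eq divide_right_mono)
  next
    case False
    then show ?thesis
      using that \<open>\<rho> \<ge> 0\<close> by (simp add: hyper_pmf_eq)
  qed
  have "(\<Sum>x\<in>{0..n}. if P x then hyper_pmf N R n x else 0) \<le> (\<Sum>x\<in>{0..n}. \<rho> * hyper_pmf N R' n x)"
    by (rule sum_mono) (rule termwise)
  also have "\<dots> = \<rho>"
    using assms(1,2) by (simp flip: sum_distrib_left add: sum_hyper_pmf)
  finally show ?thesis
    unfolding \<rho>_def .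
qed

definition red_mle :: "nat \<Rightarrow> nat \<Rightarrow> nat \<Rightarrow> nat" where
  "red_mle N n r = min N ((N + 1) * r div n)"

lemma red_mle_eq_floor: "min N (nat \<lfloor>real (N + 1) * real r / real n\<rfloor>) = red_mle N n r"
proof -
  have "real (N + 1) * real r / real n = real ((N + 1) * r) / real n"
    by (simp only: of_nat_mult)
  then show ?thesis
    unfolding red_mle_def by (simp only: floor_divide_of_nat_eq nat_int)
qed

lemma le_red_mle:
  assumes "r \<le> n" "n \<le> N"
  shows "r \<le> red_mle N n r"
proof (cases "n = 0")
  case False
  have "r * n \<le> (N + 1) * r"
    using mult_le_mono1[of n "N + 1" r] assms(2) by (simp add: mult.commute)
  then show ?thesis
    using False assms unfolding red_mle_def by (simp add: less_eq_div_iff_mult_less_eq)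
qed (use assms in simp)

lemma le_diff_red_mle:
  assumes "r \<le> n" "n \<le> N"
  shows "n - r \<le> N - red_mle N n r"
proof (cases "r = n")
  case False
  then have "(N + 1) * r < (N - n + r + 1) * n"
  proof -
    have "r * (N + 1 - n) < n * (N + 1 - n)"
      using assms False by simp
    then show ?thesis
      using assms by (simp add: algebra_simps)
  qed
  then have "(N + 1) * r div n \<le> N - n + r"
    using False assms by (simp add: div_less_iff_less_mult less_Suc_eq_le[symmetric])
  then show ?thesis
    using assms unfolding red_mle_def by linarith
qed (simp add: red_mle_def)

lemma red_mle_le:
  assumes "r * N \<le> n * R" "R \<le> N"
  shows "red_mle N n r \<le> R"
proof (cases "R = N")
  case False
  then have "R < N"
    using assms(2) by simp
  show ?thesis
  proof (cases "n = 0")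
    case False
    have "N * ((N + 1) * r) = (N + 1) * (r * N)"
      by (simp only: ac_simps)
    also have "\<dots> \<le> (N + 1) * (n * R)"
      using assms(1) by (rule mult_le_mono2)
    also have "\<dots> = n * ((N + 1) * R)"
      by (simp only: ac_simps)
    also have "\<dots> < n * ((R + 1) * N)"
      using \<open>R < N\<close> False by (simp add: algebra_simps)
    also have "\<dots> = N * ((R + 1) * n)"
      by (simp only: ac_simps)
    finally have "(N + 1) * r < (R + 1) * n"
      by (simp only: mult_less_cancel1)
    then have "(N + 1) * r div n < R + 1"
      using False by (subst div_less_iff_less_mult) auto
    then show ?thesis
      unfolding red_mle_def by simp
  qed (simp add: red_mle_def)
qed (simp add: red_mle_def)

lemma le_red_mle_of_le:
  assumes "n * R \<le> r * N" "R \<le> N" "0 < n"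
  shows "R \<le> red_mle N n r"
proof -
  have "R * n \<le> (N + 1) * r"
    using assms(1) by (simp add: algebra_simps)
  then show ?thesis
    using assms unfolding red_mle_def by (simp add: less_eq_div_iff_mult_less_eq)
qed

theorem theorem7:
  fixes N R B n r b :: nat
  assumes "N > 0" and "R \<le> N" and "B = N - R" and "1 \<le> n" and "n \<le> N"
    and "r \<le> R" and "b \<le> B" and "r + b = n"
  defines "\<mu> \<equiv> real n * real R / real N"
    and "Rh \<equiv> min N (nat \<lfloor>real (N + 1) * real r / real n\<rfloor>)"
  defines "Bh \<equiv> N - Rh"
  shows "(real r \<le> \<mu> \<longrightarrow> hyper_le N R n r \<le>
           real (R choose r) * real (B choose b) / (real (Rh choose r) * real (Bh choose b)))
       \<and> (real r \<ge> \<mu> \<longrightarrow> hyper_ge N R n r \<le>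
           real (R choose r) * real (B choose b) / (real (Rh choose r) * real (Bh choose b)))"
proof -
  have Rh: "Rh = red_mle N n r"
    unfolding Rh_def by (rule red_mle_eq_floor)
  have b: "b = n - r" and "r \<le> n"
    using assms(8) by auto
  have "Rh \<le> N"
    by (simp add: Rh red_mle_def)
  have "hyper_weight N Rh n r > 0"
    using le_red_mle[OF \<open>r \<le> n\<close> assms(5)] le_diff_red_mle[OF \<open>r \<le> n\<close> assms(5)]
    by (simp add: hyper_weight_def Rh)
  note tail_bound = hyper_tail_le_weight_ratio[OF \<open>Rh \<le> N\<close> assms(5) this]
  have ratio: "real (R choose r) * real (B choose b) / (real (Rh choose r) * real (Bh choose b))
      = real (hyper_weight N R n r) / real (hyper_weight N Rh n r)"
    by (simp add: hyper_weight_def Bh_def b assms(3))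
  have N: "real N > 0"
    using assms(1) by simp
  show ?thesis
    unfolding ratio hyper_le_def hyper_ge_def
  proof (intro conjI impI)
    assume "real r \<le> \<mu>"
    then have "real (r * N) \<le> real (n * R)"
      using N by (simp add: \<mu>_def field_simps)
    then have "Rh \<le> R"
      unfolding Rh of_nat_le_iff using assms(2) by (rule red_mle_le)
    then show "(\<Sum>x\<in>{0..n}. if x \<le> r then hyper_pmf N R n x else 0)
        \<le> real (hyper_weight N R n r) / real (hyper_weight N Rh n r)"
      using \<open>r \<le> n\<close> by (intro tail_bound hyper_weight_cross_le)
  next
    assume "\<mu> \<le> real r"
    then have "real (n * R) \<le> real (r * N)"
      using N by (simp add: \<mu>_def field_simps)
    then have "R \<le> Rh"
      unfolding Rh of_nat_le_iff using assms(2,4) by (intro le_red_mle_of_le) simp_all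
    then show "(\<Sum>x\<in>{0..n}. if r \<le> x then hyper_pmf N R n x else 0)
        \<le> real (hyper_weight N R n r) / real (hyper_weight N Rh n r)"
      using hyper_weight_cross_le[of r _ n R Rh N] by (intro tail_bound) (simp add: mult.commute)
  qed
qed

end
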